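(* Let $G$ be a connected claw-free graph of order $n\ge 4$. Then $\gamma_{cI}(G)=n/2$ if and only if $G\in\Omega$.
   Context: All graphs are finite and simple; $N(v)$ is the open neighborhood of $v$. $G$ is claw-free if it has no induced subgraph isomorphic to $K_{1,3}$. For $f:V(G)\to\{0,1,2\}$ let $V_i=\{v: f(v)=i\}$ and $\omega(f)=\sum_v f(v)$. A covering Italian dominating function (CID function) of $G$ is an $f:V(G)\to\{0,1,2\}$ such that every vertex $v$ with $f(v)=0$ satisfies $\sum_{u\in N(v)}f(u)\ge 2$, and $V_0$ is an independent set. $\gamma_{cI}(G)$ is the minimum of $\omega(f)$ over all CID functions of $G$. A $k$-sun whose Hamiltonian graph is a cycle ($k\ge3$): take a cycle $v_1v_2\cdots v_kv_1$ and add $k$ new vertices $u_1,\dots,u_k$ with $u_i$ adjacent exactly to $v_i$ and $v_{i+1}$ (where $v_{k+1}=v_1$). A $k$-triangle ($k\ge1$): a path $v_1v_2\cdots v_k$ together with $k-1$ new vertices $u_1,\dots,u_{k-1}$, where $u_j$ is adjacent exactly to $v_j$ and $v_{j+1}$ (so it has $k-1$ triangles; a $1$-triangle is a single vertex). The graph $G(k_1,\dots,k_r)$: take disjoint copies of a $k_1$-triangle, a $k_2$-triangle, ..., a $k_r$-triangle, the $i$-th with path $v^i_1\cdots v^i_{k_i}$; then add $r$ new vertices $w_1,\dots,w_r$, where $w_i$ is adjacent exactly to $v^i_{k_i}$ and $v^{i+1}_1$ (indices of the triangles taken cyclically, so $w_r$ is adjacent to $v^r_{k_r}$ and $v^1_1$).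 (For example, $G(1,\dots,1)$ with $r$ entries is the cycle $C_{2r}$, and with a single entry $G(2)\cong K_4-e$.) $\Omega$ is the family of graphs $G$ that either (i) are a $k$-sun whose Hamiltonian graph is a cycle, or (ii) are of the form $G(k_1,\dots,k_r)$. *)

theory Defs
  imports Main
begin

definition simple_graph :: "'a set \<Rightarrow> ('a \<Rightarrow> 'a \<Rightarrow> bool) \<Rightarrow> bool" where
  "simple_graph V E \<longleftrightarrow> finite V \<and> (\<forall>x y. E x y \<longrightarrow> E y x) \<and> (\<forall>x. \<not> E x x)
     \<and> (\<forall>x y. E x y \<longrightarrow> x \<in> V \<and> y \<in> V)"

definition connected_graph :: "'a set \<Rightarrow> ('a \<Rightarrow> 'a \<Rightarrow> bool) \<Rightarrow> bool" where
  "connected_graph V E \<longleftrightarrow> (\<forall>x\<in>V. \<forall>y\<in>V. E\<^sup>*\<^sup>* x y)"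

definition claw_free :: "'a set \<Rightarrow> ('a \<Rightarrow> 'a \<Rightarrow> bool) \<Rightarrow> bool" where
  "claw_free V E \<longleftrightarrow> \<not> (\<exists>v\<in>V. \<exists>a\<in>V. \<exists>b\<in>V. \<exists>c\<in>V.
     E v a \<and> E v b \<and> E v c \<and> a \<noteq> b \<and> a \<noteq> c \<and> b \<noteq> c
     \<and> \<not> E a b \<and> \<not> E a c \<and> \<not> E b c)"

definition nbhd :: "'a set \<Rightarrow> ('a \<Rightarrow> 'a \<Rightarrow> bool) \<Rightarrow> 'a \<Rightarrow> 'a set" where
  "nbhd V E v = {u \<in> V. E v u}"

text \<open>Covering Italian dominating function (values outside V are irrelevant).\<close>
definition cid_function :: "'a set \<Rightarrow> ('a \<Rightarrow> 'a \<Rightarrow> bool) \<Rightarrow> ('a \<Rightarrow> nat) \<Rightarrow> bool" where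
  "cid_function V E f \<longleftrightarrow> (\<forall>v\<in>V. f v \<le> 2)
     \<and> (\<forall>v\<in>V. f v = 0 \<longrightarrow> (\<Sum>u\<in>nbhd V E v. f u) \<ge> 2)
     \<and> (\<forall>u\<in>V. \<forall>v\<in>V. E u v \<longrightarrow> \<not> (f u = 0 \<and> f v = 0))"

definition weight :: "'a set \<Rightarrow> ('a \<Rightarrow> nat) \<Rightarrow> nat" where
  "weight V f = (\<Sum>v\<in>V. f v)"

definition gamma_cI :: "'a set \<Rightarrow> ('a \<Rightarrow> 'a \<Rightarrow> bool) \<Rightarrow> nat" where
  "gamma_cI V E = (LEAST w. \<exists>f. cid_function V E f \<and> weight V f = w)"

definition graph_iso :: "'a set \<Rightarrow> ('a \<Rightarrow> 'a \<Rightarrow> bool) \<Rightarrow> 'b set \<Rightarrow> ('b \<Rightarrow> 'b \<Rightarrow> bool) \<Rightarrow> bool" where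
  "graph_iso V E V' E' \<longleftrightarrow> (\<exists>h. bij_betw h V V' \<and> (\<forall>x\<in>V. \<forall>y\<in>V. E x y \<longleftrightarrow> E' (h x) (h y)))"

definition symc :: "('a \<Rightarrow> 'a \<Rightarrow> bool) \<Rightarrow> 'a \<Rightarrow> 'a \<Rightarrow> bool" where
  "symc R x y \<longleftrightarrow> R x y \<or> R y x"

text \<open>k-sun: (0,i) is v_(i+1), (1,i) is u_(i+1), i < k.\<close>
definition sun_V :: "nat \<Rightarrow> (nat \<times> nat) set" where
  "sun_V k = {(t, i). t < 2 \<and> i < k}"

definition sun_E0 :: "nat \<Rightarrow> nat \<times> nat \<Rightarrow> nat \<times> nat \<Rightarrow> bool" where
  "sun_E0 k x y \<longleftrightarrow> (\<exists>i<k.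
      (x = (0, i) \<and> y = (0, Suc i mod k))
    \<or> (x = (1, i) \<and> y = (0, i))
    \<or> (x = (1, i) \<and> y = (0, Suc i mod k)))"

definition sun_E :: "nat \<Rightarrow> nat \<times> nat \<Rightarrow> nat \<times> nat \<Rightarrow> bool" where
  "sun_E k = symc (sun_E0 k)"

text \<open>G(k_1,...,k_r) for ks = [k_1,...,k_r]: (0,i,j) is v^(i+1)_(j+1) (j < k_i),
  (1,i,j) is u^(i+1)_(j+1) (j+1 < k_i), (2,i,0) is w_(i+1); indices i < r.\<close>
definition gk_V :: "nat list \<Rightarrow> (nat \<times> nat \<times> nat) set" where
  "gk_V ks = {(0, i, j) | i j. i < length ks \<and> j < ks ! i}
           \<union> {(1, i, j) | i j. i < length ks \<and> Suc j < ks ! i}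
           \<union> {(2, i, 0) | i. i < length ks}"

definition gk_E0 :: "nat list \<Rightarrow> nat \<times> nat \<times> nat \<Rightarrow> nat \<times> nat \<times> nat \<Rightarrow> bool" where
  "gk_E0 ks x y \<longleftrightarrow> (\<exists>i < length ks.
      (\<exists>j. Suc j < ks ! i \<and>
         ((x = (0, i, j) \<and> y = (0, i, Suc j))
        \<or> (x = (1, i, j) \<and> y = (0, i, j))
        \<or> (x = (1, i, j) \<and> y = (0, i, Suc j))))
    \<or> (x = (2, i, 0) \<and> y = (0, i, ks ! i - 1))
    \<or> (x = (2, i, 0) \<and> y = (0, Suc i mod length ks, 0)))"

definition gk_E :: "nat list \<Rightarrow> nat \<times> nat \<times> nat \<Rightarrow> nat \<times> nat \<times> nat \<Rightarrow> bool" where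
  "gk_E ks = symc (gk_E0 ks)"

definition in_Omega :: "'a set \<Rightarrow> ('a \<Rightarrow> 'a \<Rightarrow> bool) \<Rightarrow> bool" where
  "in_Omega V E \<longleftrightarrow>
     (\<exists>k\<ge>3. graph_iso V E (sun_V k) (sun_E k))
   \<or> (\<exists>ks. ks \<noteq> [] \<and> (\<forall>k\<in>set ks. k \<ge> 1) \<and> graph_iso V E (gk_V ks) (gk_E ks))"

end

theory Submission
  imports Defs
begin

text \<open>
  Let \<open>f\<close> be a CID function with zero set \<open>V\<^sub>0\<close>. Each vertex of \<open>V\<^sub>0\<close> sees weight at least 2,
  while by claw-freeness and independence of \<open>V\<^sub>0\<close> every vertex has at most two neighbours in
  \<open>V\<^sub>0\<close>; double counting gives \<open>|V\<^sub>0| \<le> \<omega>(f)\<close>, and trivially \<open>|V - V\<^sub>0| \<le> \<omega>(f)\<close>, so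
  \<open>n \<le> 2\<gamma>\<^sub>c\<^sub>I\<close>. In the equality case every vertex of \<open>V\<^sub>0\<close> has degree 2 and every other
  vertex has exactly two neighbours in \<open>V\<^sub>0\<close>, so the edges meeting \<open>V\<^sub>0\<close> form a 2-regular
  graph. Following it from a vertex outside \<open>V\<^sub>0\<close> closes up into an even cycle which, by
  claw-freeness and connectivity, passes through all of \<open>V\<close>. Hence \<open>G\<close> is a necklace: a
  rim \<open>v\<^sub>0 \<dots> v\<^sub>m\<^sub>-\<^sub>1\<close>, tips \<open>u\<^sub>i\<close> adjacent to \<open>v\<^sub>i\<close> and \<open>v\<^sub>i\<^sub>+\<^sub>1\<close>, and some set of rim edges
  \<open>v\<^sub>i v\<^sub>i\<^sub>+\<^sub>1\<close>. With all rim edges it is a sun (or \<open>K\<^sub>4 - e\<close> for \<open>m = 2\<close>); otherwise, rotated so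
  that \<open>v\<^sub>m\<^sub>-\<^sub>1 v\<^sub>0\<close> is missing, the maximal runs of rim edges are the blocks of some
  \<open>G(k\<^sub>1,\<dots>,k\<^sub>r)\<close>. Conversely every graph in \<open>\<Omega>\<close> is a necklace, and the function that is 1 on
  the rim shows \<open>\<gamma>\<^sub>c\<^sub>I \<le> n/2\<close>.
\<close>

lemma Suc_mod_neq: "2 \<le> m \<Longrightarrow> i < m \<Longrightarrow> Suc i mod m \<noteq> i"
  by (cases "Suc i = m") auto

lemma add_mod_cancel_right:
  fixes i i' r m :: nat
  assumes "i < m" and "i' < m" and "(i + r) mod m = (i' + r) mod m"
  shows "i = i'"
proof -
  have "(int i + int r) mod int m = (int i' + int r) mod int m"
    using assms(3) by (metis of_nat_add of_nat_mod)
  then have "int i mod int m = int i' mod int m"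
    using mod_diff_cong[of "int i + int r" "int m" "int i' + int r" "int r" "int r"] by simp
  then show ?thesis
    using assms(1,2) by simp
qed

lemma symc_commute: "symc R x y \<longleftrightarrow> symc R y x"
  unfolding symc_def by auto

lemma graph_iso_sym:
  assumes "graph_iso V E V' E'"
  shows "graph_iso V' E' V E"
proof -
  obtain h where h: "bij_betw h V V'" and e: "\<forall>x\<in>V. \<forall>y\<in>V. E x y \<longleftrightarrow> E' (h x) (h y)"
    using assms unfolding graph_iso_def by blast
  let ?g = "inv_into V h"
  have "\<forall>x\<in>V'. \<forall>y\<in>V'. E' x y \<longleftrightarrow> E (?g x) (?g y)"
  proof (intro ballI)
    fix x y assume "x \<in> V'" "y \<in> V'"
    then have "?g x \<in> V" "?g y \<in> V" "h (?g x) = x" "h (?g y) = y"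
      using h by (auto simp: bij_betw_def inv_into_into f_inv_into_f)
    then show "E' x y \<longleftrightarrow> E (?g x) (?g y)" using e by metis
  qed
  then show ?thesis
    using bij_betw_inv_into[OF h] unfolding graph_iso_def by blast
qed

lemma graph_iso_trans:
  assumes "graph_iso V E V' E'" and "graph_iso V' E' V'' E''"
  shows "graph_iso V E V'' E''"
proof -
  obtain h where h: "bij_betw h V V'" and e: "\<forall>x\<in>V. \<forall>y\<in>V. E x y \<longleftrightarrow> E' (h x) (h y)"
    using assms(1) unfolding graph_iso_def by blast
  obtain g where g: "bij_betw g V' V''" and e': "\<forall>x\<in>V'. \<forall>y\<in>V'. E' x y \<longleftrightarrow> E'' (g x) (g y)"
    using assms(2) unfolding graph_iso_def by blast
  have "\<forall>x\<in>V. \<forall>y\<in>V. E x y \<longleftrightarrow> E'' ((g \<circ> h) x) ((g \<circ> h) y)"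
    using e e' h by (auto simp: bij_betw_def)
  then show ?thesis
    using bij_betw_trans[OF h g] unfolding graph_iso_def by blast
qed

lemma graph_iso_card: "graph_iso V E V' E' \<Longrightarrow> card V = card V'"
  unfolding graph_iso_def by (metis bij_betw_same_card)

lemma cid_function_graph_iso:
  assumes iso: "graph_iso V E V' E'" and f: "cid_function V' E' f"
  obtains g where "cid_function V E g" and "weight V g = weight V' f"
proof -
  obtain h where h: "bij_betw h V V'" and e: "\<forall>x\<in>V. \<forall>y\<in>V. E x y \<longleftrightarrow> E' (h x) (h y)"
    using iso unfolding graph_iso_def by blast
  have hV: "h v \<in> V'" if "v \<in> V" for v
    using h that by (auto simp: bij_betw_def)
  have nbhd_image: "nbhd V' E' (h v) = h ` nbhd V E v" if "v \<in> V" for v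
    using h e that by (auto simp: nbhd_def bij_betw_def)
  have nbhd_sum: "(\<Sum>u\<in>nbhd V E v. f (h u)) = (\<Sum>u\<in>nbhd V' E' (h v). f u)" if "v \<in> V" for v
  proof -
    have "inj_on h (nbhd V E v)"
      using h by (auto simp: bij_betw_def nbhd_def intro: inj_on_subset)
    then show ?thesis
      by (simp add: nbhd_image[OF that] sum.reindex)
  qed
  have "cid_function V E (f \<circ> h)"
    using f nbhd_sum hV e unfolding cid_function_def by auto
  moreover have "weight V (f \<circ> h) = weight V' f"
    using sum.reindex_bij_betw[OF h, of f] by (simp add: weight_def)
  ultimately show thesis by (rule that)
qed

lemma cid_function_const_1: "cid_function V E (\<lambda>_. 1)"
  by (simp add: cid_function_def)

lemma gamma_cI_le:
  assumes "cid_function V E f"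
  shows "gamma_cI V E \<le> weight V f"
  unfolding gamma_cI_def using assms by (intro Least_le) blast

lemma gamma_cI_attained:
  obtains f where "cid_function V E f" and "weight V f = gamma_cI V E"
proof -
  have "\<exists>w f. cid_function V E f \<and> weight V f = w"
    using cid_function_const_1 by blast
  then show thesis
    using LeastI_ex[of "\<lambda>w. \<exists>f. cid_function V E f \<and> weight V f = w"] that
    unfolding gamma_cI_def by blast
qed

lemma claw_free_independent_nbrs_le_2:
  assumes "claw_free V E" and "u \<in> V"
    and Z: "Z \<subseteq> V" "\<forall>a\<in>Z. \<forall>b\<in>Z. \<not> E a b"
  shows "card {a\<in>Z. E u a} \<le> 2"
proof (rule ccontr)
  assume "\<not> ?thesis"
  then have "3 \<le> card {a\<in>Z. E u a}" by simp
  then obtain N where "N \<subseteq> {a\<in>Z. E u a}" and "card N = 3"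
    by (rule obtain_subset_with_card_n)
  then obtain a b c where "{a, b, c} \<subseteq> {a\<in>Z. E u a}" "a \<noteq> b" "a \<noteq> c" "b \<noteq> c"
    by (auto simp: card_3_iff)
  then have "a \<in> V" "b \<in> V" "c \<in> V" "E u a" "E u b" "E u c" "\<not> E a b" "\<not> E a c" "\<not> E b c"
    using Z by auto
  then show False
    using assms(1,2) \<open>a \<noteq> b\<close> \<open>a \<noteq> c\<close> \<open>b \<noteq> c\<close> unfolding claw_free_def by blast
qed

lemma sum_nbhd_double_count:
  assumes "finite V" and "Z \<subseteq> V"
  shows "(\<Sum>a\<in>Z. \<Sum>u\<in>nbhd V E a. f u) = (\<Sum>u\<in>V. f u * card {a\<in>Z. E a u})"
proof -
  have "(\<Sum>a\<in>Z. \<Sum>u\<in>nbhd V E a. f u) = (\<Sum>a\<in>Z. \<Sum>u\<in>V. if E a u then f u else 0)"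
    using assms(1) by (simp add: nbhd_def sum.inter_filter)
  also have "\<dots> = (\<Sum>u\<in>V. \<Sum>a\<in>Z. if E a u then f u else 0)"
    by (rule sum.swap)
  also have "\<dots> = (\<Sum>u\<in>V. f u * card {a\<in>Z. E a u})"
    using finite_subset[OF assms(2,1)] by (simp add: sum.inter_filter[symmetric] mult.commute)
  finally show ?thesis .
qed

locale claw_free_cid =
  fixes V :: "'a set" and E :: "'a \<Rightarrow> 'a \<Rightarrow> bool" and f :: "'a \<Rightarrow> nat"
  assumes simple: "simple_graph V E" and claw_free: "claw_free V E"
    and cid: "cid_function V E f"
begin

abbreviation V0 :: "'a set" where
  "V0 \<equiv> {v\<in>V. f v = 0}"

lemma finite_V: "finite V"
  using simple by (simp add: simple_graph_def)

lemma E_sym: "E a b \<Longrightarrow> E b a"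
  using simple by (simp add: simple_graph_def)

lemma V0_independent: "\<forall>a\<in>V0. \<forall>b\<in>V0. \<not> E a b"
  using cid unfolding cid_function_def by blast

lemma V0_nbrs_le_2:
  assumes "u \<in> V"
  shows "card {a\<in>V0. E a u} \<le> 2"
proof -
  have "{a\<in>V0. E a u} = {a\<in>V0. E u a}"
    using E_sym by blast
  then show ?thesis
    using claw_free_independent_nbrs_le_2[OF claw_free assms _ V0_independent] by simp
qed

lemma weight_eq_sum_nonzero: "weight V f = sum f (V - V0)"
  unfolding weight_def using finite_V by (intro sum.mono_neutral_right) auto

lemma card_nonzero_le_weight: "card (V - V0) \<le> weight V f"
proof -
  have "card (V - V0) = (\<Sum>u\<in>V - V0. 1)" by simp
  also have "\<dots> \<le> weight V f"
    unfolding weight_eq_sum_nonzero by (rule sum_mono) auto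
  finally show ?thesis .
qed

lemma nbhd_sums_bounds:
  shows "2 * card V0 \<le> (\<Sum>a\<in>V0. \<Sum>u\<in>nbhd V E a. f u)"
    and "(\<Sum>u\<in>V. f u * card {a\<in>V0. E a u}) \<le> 2 * weight V f"
proof -
  show "2 * card V0 \<le> (\<Sum>a\<in>V0. \<Sum>u\<in>nbhd V E a. f u)"
    using sum_mono[of V0 "\<lambda>_. 2" "\<lambda>a. \<Sum>u\<in>nbhd V E a. f u"] cid
    by (simp add: cid_function_def mult.commute)
  show "(\<Sum>u\<in>V. f u * card {a\<in>V0. E a u}) \<le> 2 * weight V f"
    using sum_mono[of V "\<lambda>u. f u * card {a\<in>V0. E a u}" "\<lambda>u. f u * 2"] V0_nbrs_le_2
    by (simp add: weight_def sum_distrib_right[symmetric] mult.commute)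
qed

lemma nbhd_sums_eq: "(\<Sum>a\<in>V0. \<Sum>u\<in>nbhd V E a. f u) = (\<Sum>u\<in>V. f u * card {a\<in>V0. E a u})"
  using finite_V by (intro sum_nbhd_double_count) auto

lemma card_V0_le_weight: "card V0 \<le> weight V f"
  using nbhd_sums_bounds nbhd_sums_eq by simp

lemma card_V_split: "card V = card V0 + card (V - V0)"
  using finite_V card_Diff_subset[of V0 V] card_mono[of V V0] by fastforce

lemma card_le_2_weight: "card V \<le> 2 * weight V f"
  using card_V_split card_V0_le_weight card_nonzero_le_weight by linarith

context
  assumes tight: "2 * weight V f = card V"
begin

lemma tight_cards: "card V0 = weight V f" "card (V - V0) = weight V f"
  using tight card_V_split card_V0_le_weight card_nonzero_le_weight by linarith+

lemma tight_nonzero_eq_1: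
  assumes "u \<in> V - V0"
  shows "f u = 1"
proof -
  have "(\<Sum>u\<in>V - V0. 1) = sum f (V - V0)"
    using tight_cards(2) weight_eq_sum_nonzero by simp
  then show ?thesis
    using sum_mono_inv[of "\<lambda>_. 1" "V - V0" f u] finite_V assms by fastforce
qed

lemma tight_V0_degree:
  assumes a: "a \<in> V0"
  shows "card (nbhd V E a) = 2"
proof -
  have "(\<Sum>a\<in>V0. 2) = (\<Sum>a\<in>V0. \<Sum>u\<in>nbhd V E a. f u)"
    using nbhd_sums_bounds nbhd_sums_eq tight_cards(1) by (simp add: mult.commute)
  moreover have "2 \<le> (\<Sum>u\<in>nbhd V E a. f u)" if "a \<in> V0" for a
    using cid that by (simp add: cid_function_def)
  ultimately have "2 = (\<Sum>u\<in>nbhd V E a. f u)"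
    by (rule sum_mono_inv) (use a finite_V in auto)
  also have "\<dots> = (\<Sum>u\<in>nbhd V E a. 1)"
  proof (rule sum.cong)
    fix u assume "u \<in> nbhd V E a"
    then have "u \<in> V - V0"
      using V0_independent a by (auto simp: nbhd_def)
    then show "f u = 1" by (rule tight_nonzero_eq_1)
  qed simp
  finally show ?thesis by simp
qed

lemma tight_nbrs_in_V0:
  assumes b: "b \<in> V - V0"
  shows "card {a\<in>V0. E b a} = 2"
proof -
  have "(\<Sum>u\<in>V. f u * card {a\<in>V0. E a u}) = (\<Sum>u\<in>V. f u * 2)"
    using nbhd_sums_bounds nbhd_sums_eq tight_cards(1)
    by (simp add: weight_def sum_distrib_right[symmetric])
  moreover have "f u * card {a\<in>V0. E a u} \<le> f u * 2" if "u \<in> V" for u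
    using V0_nbrs_le_2[OF that] by simp
  ultimately have "f b * card {a\<in>V0. E a b} = f b * 2"
    by (rule sum_mono_inv) (use b finite_V in auto)
  moreover have "{a\<in>V0. E a b} = {a\<in>V0. E b a}"
    using E_sym by blast
  ultimately show ?thesis
    using b by auto
qed

end

end

text \<open>The necklace on \<open>sun_V m\<close>: \<open>(0, i)\<close> is the rim vertex \<open>v\<^sub>i\<close>, \<open>(1, i)\<close> the tip adjacent to
  \<open>v\<^sub>i\<close> and \<open>v\<^sub>i\<^sub>+\<^sub>1\<close> (indices mod \<open>m\<close>), and the rim edge \<open>v\<^sub>i v\<^sub>i\<^sub>+\<^sub>1\<close> is present iff \<open>i \<in> S\<close>.\<close>

definition necklace_E0 :: "nat \<Rightarrow> nat set \<Rightarrow> nat \<times> nat \<Rightarrow> nat \<times> nat \<Rightarrow> bool" where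
  "necklace_E0 m S x y \<longleftrightarrow> (\<exists>i<m. (x = (0, i) \<and> y = (0, Suc i mod m) \<and> i \<in> S)
     \<or> (x = (1, i) \<and> y = (0, i)) \<or> (x = (1, i) \<and> y = (0, Suc i mod m)))"

abbreviation necklace_E :: "nat \<Rightarrow> nat set \<Rightarrow> nat \<times> nat \<Rightarrow> nat \<times> nat \<Rightarrow> bool" where
  "necklace_E m S \<equiv> symc (necklace_E0 m S)"

lemma sun_E_eq_necklace_E: "sun_E k = necklace_E k {..<k}"
proof -
  have "sun_E0 k = necklace_E0 k {..<k}"
    by (intro ext) (auto simp: sun_E0_def necklace_E0_def)
  then show ?thesis by (simp add: sun_E_def)
qed

lemma sun_V_eq: "sun_V m = {..<2} \<times> {..<m}"
  by (auto simp: sun_V_def)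

lemma card_sun_V: "card (sun_V m) = 2 * m"
  by (simp add: sun_V_eq card_cartesian_product)

lemma necklace_E0_iff:
  assumes "i < m"
  shows "necklace_E0 m S (t, i) q \<longleftrightarrow>
    (t = 0 \<and> q = (0, Suc i mod m) \<and> i \<in> S) \<or> (t = 1 \<and> (q = (0, i) \<or> q = (0, Suc i mod m)))"
  using assms by (auto simp: necklace_E0_def)

lemma necklace_E_tips: "\<not> necklace_E m S (1, i) (1, i')"
  by (auto simp: symc_def necklace_E0_def)

lemma necklace_E_tip_rim:
  "i < m \<Longrightarrow> necklace_E m S (1, i) (0, i') \<longleftrightarrow> i' = i \<or> i' = Suc i mod m"
  by (auto simp: symc_def necklace_E0_def)

lemma necklace_E_rim:
  "i < m \<Longrightarrow> i' < m \<Longrightarrow> necklace_E m S (0, i) (0, i') \<longleftrightarrow>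
     (i' = Suc i mod m \<and> i \<in> S) \<or> (i = Suc i' mod m \<and> i' \<in> S)"
  by (auto simp: symc_def necklace_E0_def)

lemma necklace_rim_cid:
  assumes "2 \<le> m"
  defines "rim \<equiv> \<lambda>(t, i). if t = 0 then 1 else 0"
  shows "cid_function (sun_V m) (necklace_E m S) rim" and "weight (sun_V m) rim = m"
proof -
  have tip_nbhd: "{(0, i), (0, Suc i mod m)} \<subseteq> nbhd (sun_V m) (necklace_E m S) (1, i)" if "i < m" for i
    using that necklace_E_tip_rim[of i m S] by (simp add: nbhd_def sun_V_def)
  have tip_sum: "2 \<le> (\<Sum>u\<in>nbhd (sun_V m) (necklace_E m S) (1, i). rim u)" if "i < m" for i
  proof -
    have "2 = (\<Sum>u\<in>{(0, i), (0, Suc i mod m)}. rim u)"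
      using Suc_mod_neq[OF assms(1) that] by (simp add: rim_def)
    also have "\<dots> \<le> (\<Sum>u\<in>nbhd (sun_V m) (necklace_E m S) (1, i). rim u)"
      by (rule sum_mono2[OF _ tip_nbhd[OF that]]) (simp_all add: nbhd_def sun_V_eq)
    finally show ?thesis .
  qed
  show "cid_function (sun_V m) (necklace_E m S) rim"
    unfolding cid_function_def
  proof (intro conjI ballI impI)
    fix v assume "v \<in> sun_V m" and "rim v = 0"
    then obtain i where "v = (1, i)" and "i < m"
      by (auto simp: rim_def sun_V_def split: if_splits)
    then show "2 \<le> (\<Sum>u\<in>nbhd (sun_V m) (necklace_E m S) v. rim u)"
      using tip_sum by simp
  next
    fix u v assume "necklace_E m S u v"
    then show "\<not> (rim u = 0 \<and> rim v = 0)"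
      by (auto simp: rim_def symc_def necklace_E0_def)
  qed (simp add: rim_def split: prod.split)
  have "weight (sun_V m) rim = (\<Sum>t<2::nat. \<Sum>i<m. rim (t, i))"
    by (simp add: weight_def sun_V_eq sum.cartesian_product)
  then show "weight (sun_V m) rim = m"
    by (simp add: rim_def numeral_2_eq_2)
qed

lemma necklace_gamma_cI_le:
  assumes "graph_iso V E (sun_V m) (necklace_E m S)" and "2 \<le> m"
  shows "2 * gamma_cI V E \<le> card V"
proof -
  obtain f where f: "cid_function V E f" and "weight V f = m"
    by (rule cid_function_graph_iso[OF assms(1) necklace_rim_cid(1)[OF assms(2)]])
      (use necklace_rim_cid(2)[OF assms(2)] in simp)
  then have "gamma_cI V E \<le> m"
    using gamma_cI_le[OF f] by simp
  then show ?thesis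
    using graph_iso_card[OF assms(1)] card_sun_V by simp
qed

lemma necklace_rotate:
  assumes "0 < m"
  shows "graph_iso (sun_V m) (necklace_E m {i. (i + r) mod m \<in> S}) (sun_V m) (necklace_E m S)"
proof -
  define \<rho> :: "nat \<times> nat \<Rightarrow> nat \<times> nat" where "\<rho> = (\<lambda>(t, i). (t, (i + r) mod m))"
  have \<rho>_simp: "\<rho> (t, i) = (t, (i + r) mod m)" for t i
    by (simp add: \<rho>_def)
  have \<rho>_into: "\<rho> ` sun_V m \<subseteq> sun_V m"
    using assms by (auto simp: sun_V_def \<rho>_def)
  have \<rho>_inj: "inj_on \<rho> (sun_V m)"
    by (auto simp: inj_on_def sun_V_def \<rho>_def intro: add_mod_cancel_right)
  have \<rho>_eq_iff: "\<rho> p = \<rho> q \<longleftrightarrow> p = q" if "p \<in> sun_V m" and "q \<in> sun_V m" for p q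
    using inj_onD[OF \<rho>_inj _ that] by blast
  have \<rho>_succ: "\<rho> (0, Suc i mod m) = (0, Suc ((i + r) mod m) mod m)" for i
    by (simp add: \<rho>_simp mod_simps)
  have succ_in: "(0, Suc i mod m) \<in> sun_V m" "(0, i) \<in> sun_V m" if "i < m" for i
    using assms that by (auto simp: sun_V_def)
  have edges: "necklace_E0 m {i. (i + r) mod m \<in> S} p q \<longleftrightarrow> necklace_E0 m S (\<rho> p) (\<rho> q)"
    if p: "p \<in> sun_V m" and q: "q \<in> sun_V m" for p q
  proof -
    obtain t i where ti: "p = (t, i)" "i < m"
      using p by (auto simp: sun_V_def)
    have "(i + r) mod m < m"
      using assms by simp
    then have "necklace_E0 m S (\<rho> p) (\<rho> q) \<longleftrightarrow>
        (t = 0 \<and> \<rho> q = \<rho> (0, Suc i mod m) \<and> (i + r) mod m \<in> S)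
      \<or> (t = 1 \<and> (\<rho> q = \<rho> (0, i) \<or> \<rho> q = \<rho> (0, Suc i mod m)))"
      unfolding ti \<rho>_succ \<rho>_simp[of t i] \<rho>_simp[of 0 i] by (rule necklace_E0_iff)
    also have "\<dots> \<longleftrightarrow> (t = 0 \<and> q = (0, Suc i mod m) \<and> (i + r) mod m \<in> S)
      \<or> (t = 1 \<and> (q = (0, i) \<or> q = (0, Suc i mod m)))"
      using \<rho>_eq_iff[OF q] succ_in[OF ti(2)] by simp
    also have "\<dots> \<longleftrightarrow> necklace_E0 m {i. (i + r) mod m \<in> S} p q"
      unfolding ti using necklace_E0_iff[OF ti(2)] by simp
    finally show ?thesis ..
  qed
  have "bij_betw \<rho> (sun_V m) (sun_V m)"
    unfolding bij_betw_def
    using \<rho>_inj endo_inj_surj[OF _ \<rho>_into \<rho>_inj] by (simp add: sun_V_eq)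
  moreover have "necklace_E m {i. (i + r) mod m \<in> S} p q \<longleftrightarrow> necklace_E m S (\<rho> p) (\<rho> q)"
    if "p \<in> sun_V m" and "q \<in> sun_V m" for p q
    using edges that by (simp add: symc_def)
  ultimately show ?thesis
    unfolding graph_iso_def by blast
qed

lemma necklace_E_2:
  assumes "0 \<in> S \<or> 1 \<in> S"
  shows "necklace_E 2 S = necklace_E 2 {0}"
proof -
  have "(\<exists>i<2. P i) \<longleftrightarrow> P 0 \<or> P 1" for P :: "nat \<Rightarrow> bool"
    by (auto simp: less_2_cases_iff)
  then have "necklace_E0 2 S p q \<longleftrightarrow> (p = (0, 0) \<and> q = (0, 1) \<and> 0 \<in> S) \<or> (p = (0, 1) \<and> q = (0, 0) \<and> 1 \<in> S)
      \<or> (p = (1, 0) \<and> (q = (0, 0) \<or> q = (0, 1))) \<or> (p = (1, 1) \<and> (q = (0, 1) \<or> q = (0, 0)))" for S p q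
    unfolding necklace_E0_def by auto
  then show ?thesis
    using assms by (auto simp: symc_def fun_eq_iff)
qed

text \<open>A list \<open>ks\<close> of positive block lengths cuts the rim positions \<open>0, \<dots>, sum_list ks - 1\<close> into
  consecutive blocks; the inner positions are those followed by a position of the same block.\<close>

definition block_start :: "nat list \<Rightarrow> nat \<Rightarrow> nat" where
  "block_start ks i = sum_list (take i ks)"

definition inner_positions :: "nat list \<Rightarrow> nat set" where
  "inner_positions ks = {block_start ks i + j | i j. i < length ks \<and> Suc j < ks ! i}"

lemma block_start_0 [simp]: "block_start ks 0 = 0"
  by (simp add: block_start_def)

lemma block_start_Suc: "i < length ks \<Longrightarrow> block_start ks (Suc i) = block_start ks i + ks ! i"
  by (simp add: block_start_def take_Suc_conv_app_nth)

lemma block_start_Cons_Suc [simp]: "block_start (k # ks) (Suc i) = k + block_start ks i"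
  by (simp add: block_start_def)

lemma block_start_length: "block_start ks (length ks) = sum_list ks"
  by (simp add: block_start_def)

lemma block_start_snoc: "i \<le> length ks \<Longrightarrow> block_start (ks @ [k]) i = block_start ks i"
  by (simp add: block_start_def)

lemma block_start_mono: "i \<le> i' \<Longrightarrow> block_start ks i \<le> block_start ks i'"
proof -
  assume "i \<le> i'"
  then have "take i' ks = take i ks @ take (i' - i) (drop i ks)"
    by (metis le_add_diff_inverse take_add)
  then show ?thesis
    by (simp add: block_start_def)
qed

lemma block_end_le_sum: "i < length ks \<Longrightarrow> block_start ks i + ks ! i \<le> sum_list ks"
  using block_start_Suc[of i ks] block_start_mono[of "Suc i" "length ks" ks] block_start_length[of ks]
  by simp

lemma block_position_unique:
  assumes "i < length ks" "j < ks ! i" "i' < length ks" "j' < ks ! i'"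
    and "block_start ks i + j = block_start ks i' + j'"
  shows "i = i' \<and> j = j'"
proof -
  have "\<not> i < i'" if "i < length ks" "j < ks ! i" "block_start ks i + j = block_start ks i' + j'"
    for i i' j j'
    using block_start_mono[of "Suc i" i' ks] block_start_Suc[OF that(1)] that by auto
  then have "i = i'"
    using assms by (metis linorder_neqE_nat)
  then show ?thesis
    using assms by simp
qed

lemma block_position_exists:
  "l < sum_list ks \<Longrightarrow> \<exists>i j. i < length ks \<and> j < ks ! i \<and> l = block_start ks i + j"
proof (induction ks arbitrary: l)
  case (Cons k ks)
  show ?case
  proof (cases "l < k")
    case True
    then show ?thesis by (intro exI[of _ 0] exI[of _ l]) simp
  next
    case False
    then have "l - k < sum_list ks"
      using Cons.prems by simp
    then obtain i j where "i < length ks" "j < ks ! i" "l - k = block_start ks i + j"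
      using Cons.IH by blast
    then show ?thesis
      using False by (intro exI[of _ "Suc i"] exI[of _ j]) simp
  qed
qed simp

definition block_succ :: "nat list \<Rightarrow> nat \<times> nat \<Rightarrow> nat \<times> nat" where
  "block_succ ks p = (case p of (i, j) \<Rightarrow>
     if Suc j < ks ! i then (i, Suc j) else (Suc i mod length ks, 0))"

lemma block_succ_valid:
  assumes "\<forall>k\<in>set ks. 1 \<le> k" and "i < length ks"
  shows "fst (block_succ ks (i, j)) < length ks \<and> snd (block_succ ks (i, j)) < ks ! fst (block_succ ks (i, j))"
proof -
  have "Suc i mod length ks < length ks"
    using assms(2) by (intro mod_less_divisor) auto
  moreover from this have "1 \<le> ks ! (Suc i mod length ks)"
    using assms(1) nth_mem by blast
  ultimately show ?thesis
    using assms(2) by (auto simp: block_succ_def)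
qed

lemma block_start_block_succ:
  assumes pos: "\<forall>k\<in>set ks. 1 \<le> k" and "i < length ks" and "j < ks ! i"
  shows "Suc (block_start ks i + j) mod sum_list ks =
    block_start ks (fst (block_succ ks (i, j))) + snd (block_succ ks (i, j))"
proof (cases "Suc j < ks ! i")
  case True
  then show ?thesis
    using block_end_le_sum[OF assms(2)] by (simp add: block_succ_def)
next
  case False
  then have next_start: "Suc (block_start ks i + j) = block_start ks (Suc i)"
    using assms(2,3) block_start_Suc by simp
  show ?thesis
  proof (cases "Suc i < length ks")
    case True
    then have "block_start ks (Suc i) < sum_list ks"
      using block_end_le_sum[OF True] pos nth_mem[OF True] by fastforce
    then show ?thesis
      using False True next_start by (simp add: block_succ_def)
  next
    case False
    then have "Suc i = length ks"
      using assms(2) by simp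
    then show ?thesis
      using \<open>\<not> Suc j < ks ! i\<close> next_start block_start_length by (simp add: block_succ_def)
  qed
qed

text \<open>Laying the blocks of \<open>G(ks)\<close> end to end along a rim: \<open>gk_vertex ks 0 i j\<close> is the path
  vertex at offset \<open>j\<close> of block \<open>i\<close>, and \<open>gk_vertex ks 1 i j\<close> the triangle tip after it, which is
  \<open>(1, i, j)\<close> inside the block and the connector \<open>(2, i, 0)\<close> at its end.\<close>

definition gk_vertex :: "nat list \<Rightarrow> nat \<Rightarrow> nat \<Rightarrow> nat \<Rightarrow> nat \<times> nat \<times> nat" where
  "gk_vertex ks t i j = (if t = 0 then (0, i, j) else if Suc j < ks ! i then (1, i, j) else (2, i, 0))"

definition gk_to_necklace :: "nat list \<Rightarrow> nat \<times> nat \<times> nat \<Rightarrow> nat \<times> nat" where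
  "gk_to_necklace ks x = (case x of (t, i, j) \<Rightarrow>
     if t = 0 then (0, block_start ks i + j)
     else if t = 1 then (1, block_start ks i + j)
     else (1, block_start ks i + ks ! i - 1))"

lemma gk_vertex_in_gk_V: "i < length ks \<Longrightarrow> j < ks ! i \<Longrightarrow> gk_vertex ks t i j \<in> gk_V ks"
  by (auto simp: gk_vertex_def gk_V_def)

lemma gk_to_necklace_gk_vertex:
  "j < ks ! i \<Longrightarrow> t < 2 \<Longrightarrow> gk_to_necklace ks (gk_vertex ks t i j) = (t, block_start ks i + j)"
  by (auto simp: gk_vertex_def gk_to_necklace_def less_2_cases_iff)

lemma gk_V_obtain_gk_vertex:
  assumes "\<forall>k\<in>set ks. 1 \<le> k" and "x \<in> gk_V ks"
  obtains t i j where "t < 2" "i < length ks" "j < ks ! i" "x = gk_vertex ks t i j"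
proof -
  from assms(2) consider
      (rim) i j where "x = (0, i, j)" "i < length ks" "j < ks ! i"
    | (tip) i j where "x = (1, i, j)" "i < length ks" "Suc j < ks ! i"
    | (link) i where "x = (2, i, 0)" "i < length ks"
    unfolding gk_V_def by blast
  then show thesis
  proof cases
    case rim
    then show ?thesis using that[of 0 i j] by (simp add: gk_vertex_def)
  next
    case tip
    then show ?thesis using that[of 1 i j] by (simp add: gk_vertex_def)
  next
    case link
    then have "1 \<le> ks ! i"
      using assms(1) by simp
    then show ?thesis using link that[of 1 i "ks ! i - 1"] by (simp add: gk_vertex_def)
  qed
qed

lemma gk_to_necklace_bij:
  assumes pos: "\<forall>k\<in>set ks. 1 \<le> k"
  shows "bij_betw (gk_to_necklace ks) (gk_V ks) (sun_V (sum_list ks))"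
  unfolding bij_betw_def
proof (intro conjI inj_onI subset_antisym subsetI)
  fix x y assume x: "x \<in> gk_V ks" and y: "y \<in> gk_V ks"
    and eq: "gk_to_necklace ks x = gk_to_necklace ks y"
  obtain t i j where "t < 2" "i < length ks" "j < ks ! i" "x = gk_vertex ks t i j"
    using gk_V_obtain_gk_vertex[OF pos x] .
  moreover obtain t' i' j' where "t' < 2" "i' < length ks" "j' < ks ! i'"
    "y = gk_vertex ks t' i' j'"
    using gk_V_obtain_gk_vertex[OF pos y] .
  ultimately show "x = y"
    using eq block_position_unique[of i ks j i' j'] by (simp add: gk_to_necklace_gk_vertex)
next
  fix p assume "p \<in> gk_to_necklace ks ` gk_V ks"
  then obtain x where x: "x \<in> gk_V ks" and p: "p = gk_to_necklace ks x" ..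
  obtain t i j where "t < 2" "i < length ks" "j < ks ! i" and "x = gk_vertex ks t i j"
    using gk_V_obtain_gk_vertex[OF pos x] .
  moreover from this have "block_start ks i + j < sum_list ks"
    using block_end_le_sum[of i ks] by linarith
  ultimately show "p \<in> sun_V (sum_list ks)"
    using p by (simp add: gk_to_necklace_gk_vertex sun_V_def)
next
  fix p assume "p \<in> sun_V (sum_list ks)"
  then obtain t l where "p = (t, l)" "t < 2" "l < sum_list ks"
    by (auto simp: sun_V_def)
  moreover obtain i j where "i < length ks" "j < ks ! i" "l = block_start ks i + j"
    using block_position_exists[OF \<open>l < sum_list ks\<close>] by blast
  ultimately show "p \<in> gk_to_necklace ks ` gk_V ks"
    using gk_vertex_in_gk_V by (intro rev_image_eqI[of "gk_vertex ks t i j"]) (simp_all add: gk_to_necklace_gk_vertex)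
qed

lemma gk_E0_gk_vertex:
  assumes "i < length ks" "j < ks ! i" "t < 2" "t' < 2"
  shows "gk_E0 ks (gk_vertex ks t i j) (gk_vertex ks t' i' j') \<longleftrightarrow> t' = 0 \<and>
    ((t = 0 \<and> Suc j < ks ! i \<and> (i', j') = block_succ ks (i, j))
     \<or> (t = 1 \<and> ((i', j') = (i, j) \<or> (i', j') = block_succ ks (i, j))))"
  using assms unfolding gk_E0_def gk_vertex_def block_succ_def
  by (auto simp: less_2_cases_iff)

lemma necklace_E0_block_positions:
  assumes pos: "\<forall>k\<in>set ks. 1 \<le> k"
    and ij: "i < length ks" "j < ks ! i" and ij': "i' < length ks" "j' < ks ! i'"
  shows "necklace_E0 (sum_list ks) (inner_positions ks) (t, block_start ks i + j) (t', block_start ks i' + j')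
    \<longleftrightarrow> t' = 0 \<and>
    ((t = 0 \<and> Suc j < ks ! i \<and> (i', j') = block_succ ks (i, j))
     \<or> (t = 1 \<and> ((i', j') = (i, j) \<or> (i', j') = block_succ ks (i, j))))"
proof -
  have same: "block_start ks i' + j' = block_start ks a + b \<longleftrightarrow> (i', j') = (a, b)"
    if "a < length ks" "b < ks ! a" for a b
    using block_position_unique[OF ij' that] by auto
  have inner: "block_start ks i + j \<in> inner_positions ks \<longleftrightarrow> Suc j < ks ! i"
  proof
    assume "block_start ks i + j \<in> inner_positions ks"
    then obtain a b where "a < length ks" "Suc b < ks ! a" "block_start ks i + j = block_start ks a + b"
      unfolding inner_positions_def by blast
    then show "Suc j < ks ! i"
      using block_position_unique[OF ij, of a b] by auto
  qed (use ij(1) in \<open>auto simp: inner_positions_def\<close>)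
  have succ: "Suc (block_start ks i + j) mod sum_list ks = block_start ks i' + j'
      \<longleftrightarrow> (i', j') = block_succ ks (i, j)"
    using block_start_block_succ[OF pos ij] same block_succ_valid[OF pos ij(1), of j]
    by (cases "block_succ ks (i, j)") (simp, metis)
  have "block_start ks i + j < sum_list ks"
    using block_end_le_sum[OF ij(1)] ij(2) by linarith
  then show ?thesis
    using necklace_E0_iff inner succ same[OF ij] by auto
qed

lemma gk_iso_necklace:
  assumes pos: "\<forall>k\<in>set ks. 1 \<le> k"
  shows "graph_iso (gk_V ks) (gk_E ks) (sun_V (sum_list ks)) (necklace_E (sum_list ks) (inner_positions ks))"
proof -
  have edges: "gk_E0 ks x y \<longleftrightarrow>
      necklace_E0 (sum_list ks) (inner_positions ks) (gk_to_necklace ks x) (gk_to_necklace ks y)"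
    if x: "x \<in> gk_V ks" and y: "y \<in> gk_V ks" for x y
  proof -
    obtain t i j where "t < 2" "i < length ks" "j < ks ! i" "x = gk_vertex ks t i j"
      using gk_V_obtain_gk_vertex[OF pos x] .
    moreover obtain t' i' j' where "t' < 2" "i' < length ks" "j' < ks ! i'"
      "y = gk_vertex ks t' i' j'"
      using gk_V_obtain_gk_vertex[OF pos y] .
    ultimately show ?thesis
      by (simp add: gk_to_necklace_gk_vertex gk_E0_gk_vertex necklace_E0_block_positions[OF pos])
  qed
  show ?thesis
    unfolding graph_iso_def gk_E_def symc_def
    using gk_to_necklace_bij[OF pos] edges by blast
qed

lemma inner_positions_snoc:
  "inner_positions (ks @ [k]) = inner_positions ks \<union> {sum_list ks..<sum_list ks + k - 1}"
proof -
  have "inner_positions (ks @ [k]) =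
      {block_start (ks @ [k]) i + j | i j. i < length ks \<and> Suc j < (ks @ [k]) ! i}
    \<union> {block_start (ks @ [k]) (length ks) + j | j. Suc j < k}"
    unfolding inner_positions_def by (auto simp: less_Suc_eq) (metis nth_append_length)
  also have "{block_start (ks @ [k]) (length ks) + j | j. Suc j < k} = {sum_list ks..<sum_list ks + k - 1}"
  proof (intro set_eqI iffI)
    fix x assume "x \<in> {sum_list ks..<sum_list ks + k - 1}"
    then show "x \<in> {block_start (ks @ [k]) (length ks) + j | j. Suc j < k}"
      by (intro CollectI exI[of _ "x - sum_list ks"]) (auto simp: block_start_snoc block_start_length)
  qed (auto simp: block_start_snoc block_start_length)
  finally show ?thesis
    by (auto simp: inner_positions_def block_start_snoc nth_append)
qed

lemma exists_blocks_with_inner_positions: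
  assumes "S \<subseteq> {..<m}"
  shows "\<exists>ks. (\<forall>k\<in>set ks. 1 \<le> k) \<and> sum_list ks = Suc m \<and> inner_positions ks = S"
  using assms
proof (induction m arbitrary: S)
  case 0
  then show ?case
    by (intro exI[of _ "[1]"]) (auto simp: inner_positions_def)
next
  case (Suc m)
  have "S - {m} \<subseteq> {..<m}"
    using Suc.prems by auto
  then obtain ks where ks: "\<forall>k\<in>set ks. 1 \<le> k" "sum_list ks = Suc m" "inner_positions ks = S - {m}"
    using Suc.IH by blast
  show ?case
  proof (cases "m \<in> S")
    case False
    then have "inner_positions (ks @ [1]) = S"
      using ks(3) Suc.prems inner_positions_snoc[of ks 1] by auto
    then show ?thesis
      using ks(1,2) by (intro exI[of _ "ks @ [1]"]) simp
  next
    case True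
    obtain ks' k where ks': "ks = ks' @ [k]"
      using ks(2) by (cases ks rule: rev_cases) auto
    have "1 \<le> k" and "sum_list ks' + k = Suc m"
      using ks ks' by auto
    then have "{sum_list ks'..<sum_list ks' + Suc k - 1} = {sum_list ks'..<sum_list ks' + k - 1} \<union> {m}"
      by auto
    then have "inner_positions (ks' @ [Suc k]) = S"
      using True ks(3) ks' inner_positions_snoc[of ks'] by auto
    moreover have "\<forall>k\<in>set (ks' @ [Suc k]). 1 \<le> k"
      using ks(1) ks' by simp
    ultimately show ?thesis
      using \<open>sum_list ks' + k = Suc m\<close> by (intro exI[of _ "ks' @ [Suc k]"]) simp
  qed
qed

lemma necklace_with_gap_in_Omega:
  assumes iso: "graph_iso V E (sun_V (Suc m)) (necklace_E (Suc m) S)" and gap: "m \<notin> S"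
  shows "in_Omega V E"
proof -
  obtain ks where ks: "\<forall>k\<in>set ks. 1 \<le> k" "sum_list ks = Suc m" "inner_positions ks = S \<inter> {..<m}"
    using exists_blocks_with_inner_positions[of "S \<inter> {..<m}" m] by blast
  have "necklace_E0 (Suc m) S = necklace_E0 (Suc m) (S \<inter> {..<m})"
    using gap by (auto simp: necklace_E0_def fun_eq_iff less_Suc_eq)
  then have "graph_iso V E (sun_V (sum_list ks)) (necklace_E (sum_list ks) (inner_positions ks))"
    using iso ks(2,3) by simp
  then have "graph_iso V E (gk_V ks) (gk_E ks)"
    using graph_iso_trans graph_iso_sym[OF gk_iso_necklace[OF ks(1)]] by blast
  moreover have "ks \<noteq> []"
    using ks(2) by auto
  ultimately show ?thesis
    unfolding in_Omega_def using ks(1) by blast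
qed

lemma necklace_in_Omega:
  assumes iso: "graph_iso V E (sun_V m) (necklace_E m S)" and "2 \<le> m"
  shows "in_Omega V E"
proof (cases "{..<m} \<subseteq> S")
  case True
  show ?thesis
  proof (cases "m = 2")
    case True
    moreover have "necklace_E 2 S = necklace_E 2 {0}"
      using \<open>{..<m} \<subseteq> S\<close> True by (intro necklace_E_2) auto
    ultimately have "graph_iso V E (sun_V (Suc 1)) (necklace_E (Suc 1) {0})"
      using iso by (simp add: numeral_2_eq_2)
    then show ?thesis
      by (rule necklace_with_gap_in_Omega) simp
  next
    case False
    have "necklace_E0 m S = necklace_E0 m {..<m}"
      using True by (auto simp: necklace_E0_def fun_eq_iff)
    then have "graph_iso V E (sun_V m) (sun_E m)"
      using iso by (simp add: sun_E_eq_necklace_E)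
    then show ?thesis
      unfolding in_Omega_def using False \<open>2 \<le> m\<close> by auto
  qed
next
  case False
  then obtain d where "d < m" and "d \<notin> S"
    by auto
  obtain m' where m': "m = Suc m'"
    using \<open>2 \<le> m\<close> by (cases m) auto
  have "m' + Suc d = d + m"
    using m' by simp
  then have "(m' + Suc d) mod m = d"
    using \<open>d < m\<close> by (metis mod_add_self2 mod_less)
  then have "m' \<notin> {i. (i + Suc d) mod m \<in> S}"
    using \<open>d \<notin> S\<close> by simp
  moreover have "graph_iso V E (sun_V m) (necklace_E m {i. (i + Suc d) mod m \<in> S})"
    using graph_iso_trans[OF iso graph_iso_sym[OF necklace_rotate[of m "Suc d"]]] \<open>2 \<le> m\<close>
    by simp
  ultimately show ?thesis
    using necklace_with_gap_in_Omega m' by blast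
qed

lemma in_Omega_necklace:
  assumes "in_Omega V E" and "4 \<le> card V"
  obtains m S where "2 \<le> m" and "graph_iso V E (sun_V m) (necklace_E m S)"
  using assms(1) unfolding in_Omega_def
proof (elim disjE exE conjE)
  fix k assume "3 \<le> k" and "graph_iso V E (sun_V k) (sun_E k)"
  then show thesis
    using that[of k "{..<k}"] by (simp add: sun_E_eq_necklace_E)
next
  fix ks assume "\<forall>k\<in>set ks. 1 \<le> k" and "graph_iso V E (gk_V ks) (gk_E ks)"
  then have iso: "graph_iso V E (sun_V (sum_list ks)) (necklace_E (sum_list ks) (inner_positions ks))"
    using graph_iso_trans gk_iso_necklace by blast
  then have "2 \<le> sum_list ks"
    using graph_iso_card[OF iso] card_sun_V assms(2) by simp
  then show thesis
    using that iso by blast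
qed

locale tight_zero_set =
  fixes V :: "'a set" and E :: "'a \<Rightarrow> 'a \<Rightarrow> bool" and A :: "'a set"
  assumes simple: "simple_graph V E" and connected: "connected_graph V E"
    and claw_free: "claw_free V E"
    and A_subset: "A \<subseteq> V" and A_independent: "\<forall>a\<in>A. \<forall>a'\<in>A. \<not> E a a'"
    and A_degree: "\<forall>a\<in>A. card (nbhd V E a) = 2"
    and A_nbrs: "\<forall>b\<in>V - A. card {a\<in>A. E b a} = 2"
begin

lemma E_sym: "E u v \<Longrightarrow> E v u"
  and E_irrefl: "\<not> E u u"
  and E_in_V: "E u v \<Longrightarrow> u \<in> V \<and> v \<in> V"
  and finite_V: "finite V"
  using simple by (auto simp: simple_graph_def)

definition link :: "'a \<Rightarrow> 'a \<Rightarrow> bool" where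
  "link u v \<longleftrightarrow> E u v \<and> (u \<in> A \<or> v \<in> A)"

lemma link_sym: "link u v \<Longrightarrow> link v u"
  by (auto simp: link_def E_sym)

lemma link_in_V: "link u v \<Longrightarrow> u \<in> V \<and> v \<in> V"
  by (auto simp: link_def E_in_V)

lemma link_irrefl: "\<not> link u u"
  by (auto simp: link_def E_irrefl)

lemma link_alternates: "link u v \<Longrightarrow> u \<in> A \<longleftrightarrow> v \<notin> A"
  using A_independent by (auto simp: link_def)

lemma link_iff_E: "u \<in> A \<Longrightarrow> link u v \<longleftrightarrow> E u v"
  by (auto simp: link_def)

lemma link_degree: "v \<in> V \<Longrightarrow> card {u. link v u} = 2"
proof (cases "v \<in> A")
  case True
  then have "{u. link v u} = nbhd V E v"
    by (auto simp: link_def nbhd_def E_in_V)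
  then show ?thesis
    using A_degree True by simp
next
  case False
  assume "v \<in> V"
  have "{u. link v u} = {a\<in>A. E v a}"
    using False by (auto simp: link_def)
  then show ?thesis
    using A_nbrs False \<open>v \<in> V\<close> by simp
qed

definition other :: "'a \<Rightarrow> 'a \<Rightarrow> 'a" where
  "other v p = (SOME u. link v u \<and> u \<noteq> p)"

lemma other:
  assumes "v \<in> V" and "link v p"
  shows "link v (other v p)" and "other v p \<noteq> p"
    and "link v u \<longleftrightarrow> u = p \<or> u = other v p"
proof -
  obtain a b where ab: "{u. link v u} = {a, b}" "a \<noteq> b"
    using link_degree[OF assms(1)] card_2_iff by metis
  then have "\<exists>u. link v u \<and> u \<noteq> p"
    by blast
  then show "link v (other v p)" and "other v p \<noteq> p"
    unfolding other_def by (metis (mono_tags, lifting) someI_ex)+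
  then have "p \<in> {a, b}" and "other v p \<in> {a, b}"
    using ab(1) assms(2) by blast+
  then have "{u. link v u} = {p, other v p}"
    using ab \<open>other v p \<noteq> p\<close> by auto
  then show "link v u \<longleftrightarrow> u = p \<or> u = other v p"
    by blast
qed

lemma common_A_neighbour:
  assumes "b \<in> V - A" and "c \<in> V - A" and "E b c"
  obtains a where "a \<in> A" and "E a b" and "E a c"
proof -
  obtain a1 a2 where a12: "{a\<in>A. E b a} = {a1, a2}" "a1 \<noteq> a2"
    using A_nbrs assms(1) card_2_iff by metis
  then have "a1 \<in> V" "a2 \<in> V" "E b a1" "E b a2" "\<not> E a1 a2" "a1 \<noteq> c" "a2 \<noteq> c"
    using A_subset A_independent assms(2) by auto
  then have "E a1 c \<or> E a2 c"
    using claw_free assms a12(2) unfolding claw_free_def by blast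
  then show thesis
    using that a12(1) E_sym by blast
qed

end

locale tight_walk = tight_zero_set +
  fixes b y :: 'a
  assumes b: "b \<in> V - A" and y: "y \<in> A" and E_b_y: "E b y"
begin

fun walk :: "nat \<Rightarrow> 'a" where
  "walk 0 = b"
| "walk (Suc 0) = other b y"
| "walk (Suc (Suc k)) = other (walk (Suc k)) (walk k)"

definition prev :: "nat \<Rightarrow> 'a" where
  "prev k = (if k = 0 then y else walk (k - 1))"

lemma walk_Suc: "walk (Suc k) = other (walk k) (prev k)"
  by (cases k) (simp_all add: prev_def)

lemma walk_in_V_link_prev: "walk k \<in> V \<and> link (walk k) (prev k)"
proof (induction k)
  case 0
  then show ?case
    using b y E_b_y by (simp add: prev_def link_def)
next
  case (Suc k)
  then have "link (walk k) (walk (Suc k))"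
    using other(1) walk_Suc by metis
  then show ?case
    using link_in_V link_sym by (simp add: prev_def)
qed

lemma link_walk_Suc: "link (walk k) (walk (Suc k))"
  and walk_Suc_neq_prev: "walk (Suc k) \<noteq> prev k"
  and link_walk_iff: "link (walk k) u \<longleftrightarrow> u = prev k \<or> u = walk (Suc k)"
  using other[of "walk k" "prev k"] walk_in_V_link_prev[of k] walk_Suc[of k] by auto

lemma walk_in_A_iff: "walk k \<in> A \<longleftrightarrow> odd k"
proof (induction k)
  case 0
  then show ?case using b by simp
next
  case (Suc k)
  then show ?case using link_alternates[OF link_walk_Suc[of k]] by simp
qed

lemma walk_repeats: "\<exists>j. \<exists>i<j. walk i = walk j"
proof -
  have "walk ` {..card V} \<subseteq> V"
    using walk_in_V_link_prev by auto
  then have "\<not> inj_on walk {..card V}"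
    using card_inj_on_le[OF _ _ finite_V] by fastforce
  then show ?thesis
    unfolding inj_on_def by (metis linorder_neqE_nat)
qed

definition period :: nat where
  "period = (LEAST j. \<exists>i<j. walk i = walk j)"

lemma walk_returns: "\<exists>i<period. walk i = walk period"
  unfolding period_def using LeastI_ex[OF walk_repeats] .

lemma walk_distinct: "i < i' \<Longrightarrow> i' < period \<Longrightarrow> walk i \<noteq> walk i'"
  using not_less_Least[of i' "\<lambda>j. \<exists>i<j. walk i = walk j"] unfolding period_def by blast

lemma walk_inj_on_period: "inj_on walk {..<period}"
  using walk_distinct by (metis inj_onI lessThan_iff linorder_neqE_nat)

text \<open>The first repetition is at \<open>b\<close>: a repetition of \<open>walk i\<close> with \<open>0 < i\<close> would give \<open>walk i\<close>
  the three link neighbours \<open>walk (i - 1)\<close>, \<open>walk (i + 1)\<close> and \<open>walk (period - 1)\<close>.\<close>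

lemma walk_period: "walk period = b"
proof -
  obtain i where i: "i < period" "walk i = walk period"
    using walk_returns by blast
  have "i = 0"
  proof (rule ccontr)
    assume "i \<noteq> 0"
    then obtain i' where i': "i = Suc i'"
      by (cases i) auto
    have "link (walk (period - 1)) (walk period)"
      using link_walk_Suc[of "period - 1"] i(1) by simp
    then have "link (walk i) (walk (period - 1))"
      using i(2) link_sym by metis
    moreover from this have "i \<noteq> period - 1"
      using link_irrefl by metis
    then have "i < period - 1"
      using i(1) by simp
    ultimately have "walk (period - 1) = walk i' \<or> walk (period - 1) = walk (Suc i)"
      using link_walk_iff i' by (simp add: prev_def)
    moreover have "walk (period - 1) \<noteq> walk i'"
      using walk_distinct[of i' "period - 1"] \<open>i < period - 1\<close> i' by simp
    moreover have "walk (period - 1) \<noteq> walk (Suc i)"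
    proof (cases "Suc i < period - 1")
      case True
      then show ?thesis using walk_distinct[of "Suc i" "period - 1"] by simp
    next
      case False
      then have "period = Suc (Suc i)"
        using \<open>i < period - 1\<close> by simp
      moreover have "prev (Suc i) = walk i"
        by (simp add: prev_def)
      ultimately have False
        using walk_Suc_neq_prev[of "Suc i"] i(2) by metis
      then show ?thesis ..
    qed
    ultimately show False
      by blast
  qed
  then show ?thesis
    using i(2) by simp
qed

lemma period_even: "even period"
  and period_ge_4: "4 \<le> period"
  and walk_period_pred: "walk (period - 1) = y"
proof -
  have "0 < period"
    using walk_returns by auto
  have "period \<noteq> 1"
  proof
    assume "period = 1"
    then have "walk (Suc 0) = walk 0"
      using walk_period by simp
    then show False
      using link_walk_Suc[of 0] link_irrefl by metis
  qed
  moreover have "period \<noteq> 2"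
  proof
    assume "period = 2"
    then have "walk (Suc (Suc 0)) = prev (Suc 0)"
      using walk_period by (simp add: prev_def numeral_2_eq_2)
    then show False
      using walk_Suc_neq_prev by metis
  qed
  moreover show "even period"
    using walk_in_A_iff[of period] walk_period b by simp
  moreover obtain k where "period = 2 * k"
    using \<open>even period\<close> by blast
  ultimately show "4 \<le> period"
    using \<open>0 < period\<close> by simp
  have "walk (Suc (period - 1)) = walk 0"
    using \<open>0 < period\<close> walk_period by simp
  then have "link (walk 0) (walk (period - 1))"
    using link_walk_Suc[of "period - 1"] link_sym by metis
  then have "walk (period - 1) = y \<or> walk (period - 1) = walk 1"
    using link_walk_iff[of 0 "walk (period - 1)"] by (simp add: prev_def)
  moreover have "walk 1 \<noteq> walk (period - 1)"
    using walk_distinct[of 1 "period - 1"] \<open>4 \<le> period\<close> by simp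
  ultimately show "walk (period - 1) = y"
    by auto
qed

lemma walk_le_period_in_range: "k \<le> period \<Longrightarrow> walk k \<in> walk ` {..<period}"
  using walk_period period_ge_4 by (cases "k = period") (auto intro: rev_image_eqI[of 0])

lemma link_walk_in_range:
  assumes "k < period" and "link (walk k) u"
  shows "u \<in> walk ` {..<period}"
proof -
  have "u = prev k \<or> u = walk (Suc k)"
    using assms(2) link_walk_iff by simp
  moreover have "y \<in> walk ` {..<period}"
    using walk_le_period_in_range[of "period - 1"] walk_period_pred by simp
  then have "prev k \<in> walk ` {..<period}"
    using walk_le_period_in_range[of "k - 1"] assms(1) by (simp add: prev_def)
  ultimately show ?thesis
    using walk_le_period_in_range[of "Suc k"] assms(1) by auto
qed

lemma walk_range_closed:
  assumes v: "v \<in> walk ` {..<period}" and vu: "E v u"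
  shows "u \<in> walk ` {..<period}"
proof -
  obtain k where k: "k < period" "v = walk k"
    using v by blast
  show ?thesis
  proof (cases "link v u")
    case True
    then show ?thesis using link_walk_in_range k by simp
  next
    case False
    then have "v \<in> V - A" "u \<in> V - A"
      using vu E_in_V by (auto simp: link_def)
    then obtain a where a: "a \<in> A" "E a v" "E a u"
      using common_A_neighbour vu by blast
    then have "link v a"
      using E_sym by (simp add: link_def)
    then obtain k' where "k' < period" "a = walk k'"
      using link_walk_in_range k by blast
    then show ?thesis
      using link_walk_in_range link_iff_E a by simp
  qed
qed

lemma walk_range: "walk ` {..<period} = V"
proof
  show "walk ` {..<period} \<subseteq> V"
    using walk_in_V_link_prev by auto
  show "V \<subseteq> walk ` {..<period}"
  proof
    fix v assume "v \<in> V"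
    then have "E\<^sup>*\<^sup>* b v"
      using connected b by (simp add: connected_graph_def)
    then show "v \<in> walk ` {..<period}"
    proof (induction rule: rtranclp_induct)
      case base
      then show ?case using walk_le_period_in_range[of 0] by simp
    next
      case (step u w)
      then show ?case using walk_range_closed by blast
    qed
  qed
qed

definition necklace_size :: nat where
  "necklace_size = period div 2"

definition walk_vertex :: "nat \<times> nat \<Rightarrow> 'a" where
  "walk_vertex p = (case p of (t, i) \<Rightarrow> walk (2 * i + t))"

definition walk_rim :: "nat set" where
  "walk_rim = {i. E (walk (2 * i)) (walk (2 * Suc i))}"

lemma period_eq: "period = 2 * necklace_size"
  using period_even by (simp add: necklace_size_def)

lemma necklace_size_ge_2: "2 \<le> necklace_size"
  using period_ge_4 period_eq by simp

lemma walk_vertex_bij: "bij_betw walk_vertex (sun_V necklace_size) V"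
  unfolding bij_betw_def
proof
  show "inj_on walk_vertex (sun_V necklace_size)"
  proof (rule inj_onI)
    fix p q assume "p \<in> sun_V necklace_size" "q \<in> sun_V necklace_size" "walk_vertex p = walk_vertex q"
    then obtain t i t' i' where "p = (t, i)" "q = (t', i')" "t < 2" "t' < 2"
      "2 * i + t < period" "2 * i' + t' < period" "walk (2 * i + t) = walk (2 * i' + t')"
      by (auto simp: sun_V_def walk_vertex_def period_eq)
    moreover from this have "2 * i + t = 2 * i' + t'"
      using inj_onD[OF walk_inj_on_period] by blast
    then have "t = t' \<and> i = i'"
      using \<open>t < 2\<close> \<open>t' < 2\<close> by presburger
    ultimately show "p = q"
      by simp
  qed
  show "walk_vertex ` sun_V necklace_size = V"
  proof
    show "walk_vertex ` sun_V necklace_size \<subseteq> V"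
      using walk_in_V_link_prev by (auto simp: walk_vertex_def)
    show "V \<subseteq> walk_vertex ` sun_V necklace_size"
    proof
      fix v assume "v \<in> V"
      then obtain k where "k < period" "v = walk k"
        using walk_range by blast
      then have "(k mod 2, k div 2) \<in> sun_V necklace_size" and "v = walk_vertex (k mod 2, k div 2)"
        by (auto simp: sun_V_def walk_vertex_def period_eq)
      then show "v \<in> walk_vertex ` sun_V necklace_size"
        by blast
    qed
  qed
qed

lemma walk_wrap:
  assumes "i < necklace_size"
  shows "walk (2 * (Suc i mod necklace_size)) = walk (2 * Suc i)"
proof (cases "Suc i < necklace_size")
  case False
  then have "Suc i = necklace_size"
    using assms by simp
  then have "Suc i mod necklace_size = 0" and "2 * Suc i = period"
    using period_eq by auto
  then show ?thesis
    using walk_period by (metis mult_0_right walk.simps(1))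
qed simp

lemma walk_rim_eq_iff:
  assumes "i < necklace_size" and "i' < necklace_size"
  shows "walk (2 * i) = walk (2 * i') \<longleftrightarrow> i = i'"
  using inj_onD[OF walk_inj_on_period, of "2 * i" "2 * i'"] assms period_eq by auto

lemma walk_tip_nbrs:
  assumes "i < necklace_size"
  shows "E (walk (2 * i + 1)) u \<longleftrightarrow> u = walk (2 * i) \<or> u = walk (2 * (Suc i mod necklace_size))"
proof -
  have "walk (2 * i + 1) \<in> A"
    using walk_in_A_iff by simp
  then have "E (walk (2 * i + 1)) u \<longleftrightarrow> link (walk (2 * i + 1)) u"
    using link_iff_E by simp
  also have "\<dots> \<longleftrightarrow> u = walk (2 * i) \<or> u = walk (2 * Suc i)"
    using link_walk_iff by (simp add: prev_def)
  finally show ?thesis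
    using walk_wrap[OF assms] by simp
qed

lemma walk_rim_iff:
  "j < necklace_size \<Longrightarrow> j \<in> walk_rim \<longleftrightarrow> E (walk (2 * j)) (walk (2 * (Suc j mod necklace_size)))"
  using walk_wrap by (simp add: walk_rim_def)

lemma walk_rim_edge_consecutive:
  assumes i: "i < necklace_size" and i': "i' < necklace_size" and edge: "E (walk (2 * i)) (walk (2 * i'))"
  shows "i' = Suc i mod necklace_size \<or> i = Suc i' mod necklace_size"
proof -
  have "walk (2 * i) \<in> V - A" "walk (2 * i') \<in> V - A"
    using walk_in_A_iff walk_in_V_link_prev by auto
  then obtain a where a: "a \<in> A" "E a (walk (2 * i))" "E a (walk (2 * i'))"
    using common_A_neighbour edge by blast
  then obtain k where "k < period" "a = walk k"
    using walk_range A_subset by blast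
  moreover from this have "odd k"
    using walk_in_A_iff a(1) by simp
  then obtain l where "k = 2 * l + 1"
    by (rule oddE)
  then have l: "l < necklace_size" "a = walk (2 * l + 1)"
    using \<open>k < period\<close> \<open>a = walk k\<close> period_eq by auto
  have "Suc l mod necklace_size < necklace_size"
    using l(1) by simp
  then have "j = l \<or> j = Suc l mod necklace_size"
    if "j < necklace_size" and "E a (walk (2 * j))" for j
    using that walk_tip_nbrs[OF l(1)] walk_rim_eq_iff l(1) l(2) by metis
  then have "i = l \<or> i = Suc l mod necklace_size" "i' = l \<or> i' = Suc l mod necklace_size"
    using a i i' by blast+
  moreover have "i \<noteq> i'"
    using edge E_irrefl by metis
  ultimately show ?thesis
    by blast
qed

lemma walk_rim_edge_iff:
  assumes i: "i < necklace_size" and i': "i' < necklace_size"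
  shows "E (walk (2 * i)) (walk (2 * i')) \<longleftrightarrow>
    (i' = Suc i mod necklace_size \<and> i \<in> walk_rim) \<or> (i = Suc i' mod necklace_size \<and> i' \<in> walk_rim)"
proof
  assume edge: "E (walk (2 * i)) (walk (2 * i'))"
  then show "(i' = Suc i mod necklace_size \<and> i \<in> walk_rim) \<or> (i = Suc i' mod necklace_size \<and> i' \<in> walk_rim)"
    using walk_rim_edge_consecutive[OF i i' edge] walk_rim_iff[OF i] walk_rim_iff[OF i'] E_sym by blast
next
  assume "(i' = Suc i mod necklace_size \<and> i \<in> walk_rim) \<or> (i = Suc i' mod necklace_size \<and> i' \<in> walk_rim)"
  then show "E (walk (2 * i)) (walk (2 * i'))"
    using walk_rim_iff[OF i] walk_rim_iff[OF i'] E_sym by blast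
qed

lemma walk_tip_rim_edge_iff:
  assumes "i < necklace_size" and "i' < necklace_size"
  shows "E (walk (2 * i + 1)) (walk (2 * i')) \<longleftrightarrow> necklace_E necklace_size walk_rim (1, i) (0, i')"
proof -
  have "Suc i mod necklace_size < necklace_size"
    using assms(1) by simp
  then have "E (walk (2 * i + 1)) (walk (2 * i')) \<longleftrightarrow> i' = i \<or> i' = Suc i mod necklace_size"
    unfolding walk_tip_nbrs[OF assms(1)] using walk_rim_eq_iff assms by simp
  then show ?thesis
    using necklace_E_tip_rim[OF assms(1)] by simp
qed

lemma walk_vertex_edge_iff:
  assumes "p \<in> sun_V necklace_size" and "q \<in> sun_V necklace_size"
  shows "E (walk_vertex p) (walk_vertex q) \<longleftrightarrow> necklace_E necklace_size walk_rim p q"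
proof -
  obtain t i t' i' where pq: "p = (t, i)" "q = (t', i')" "t < 2" "t' < 2"
    "i < necklace_size" "i' < necklace_size"
    using assms by (auto simp: sun_V_def)
  then have "t = 0 \<or> t = 1" "t' = 0 \<or> t' = 1"
    by auto
  have tip: "walk (2 * j + 1) \<in> A" for j
    using walk_in_A_iff by simp
  from \<open>t = 0 \<or> t = 1\<close> \<open>t' = 0 \<or> t' = 1\<close> show ?thesis
  proof (elim disjE)
    assume "t = 0" "t' = 0"
    then show ?thesis
      using pq walk_rim_edge_iff necklace_E_rim by (simp add: walk_vertex_def)
  next
    assume "t = 0" "t' = 1"
    have "E (walk (2 * i)) (walk (2 * i' + 1)) \<longleftrightarrow> E (walk (2 * i' + 1)) (walk (2 * i))"
      using E_sym by blast
    also have "\<dots> \<longleftrightarrow> necklace_E necklace_size walk_rim (0, i) (1, i')"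
      using walk_tip_rim_edge_iff[of i' i] pq symc_commute by simp
    finally show ?thesis
      using pq \<open>t = 0\<close> \<open>t' = 1\<close> by (simp add: walk_vertex_def)
  next
    assume "t = 1" "t' = 0"
    then show ?thesis
      using pq walk_tip_rim_edge_iff[of i i'] by (simp add: walk_vertex_def)
  next
    assume "t = 1" "t' = 1"
    then show ?thesis
      using pq tip A_independent necklace_E_tips by (simp add: walk_vertex_def)
  qed
qed

lemma walk_necklace_iso: "graph_iso V E (sun_V necklace_size) (necklace_E necklace_size walk_rim)"
proof (rule graph_iso_sym)
  show "graph_iso (sun_V necklace_size) (necklace_E necklace_size walk_rim) V E"
    unfolding graph_iso_def using walk_vertex_bij walk_vertex_edge_iff by metis
qed

end

lemma (in tight_zero_set) necklace_exists:
  assumes "V - A \<noteq> {}"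
  obtains m S where "2 \<le> m" and "graph_iso V E (sun_V m) (necklace_E m S)"
proof -
  obtain b where b: "b \<in> V - A"
    using assms by blast
  then have "card {a\<in>A. E b a} = 2"
    using A_nbrs by blast
  then have "{a\<in>A. E b a} \<noteq> {}"
    by (metis card.empty zero_neq_numeral)
  then obtain y where "y \<in> A" and "E b y"
    by blast
  then interpret tight_walk V E A b y
    using b by unfold_locales
  show thesis
    using that necklace_size_ge_2 walk_necklace_iso by blast
qed

lemma tight_cid_necklace:
  assumes "simple_graph V E" and "connected_graph V E" and "claw_free V E"
    and "cid_function V E f" and tight: "2 * weight V f = card V" and "V \<noteq> {}"
  obtains m S where "2 \<le> m" and "graph_iso V E (sun_V m) (necklace_E m S)"
proof -
  interpret claw_free_cid V E f
    using assms(1,3,4) by unfold_locales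
  interpret tight_zero_set V E V0
    using assms(1-3) V0_independent tight_V0_degree[OF tight] tight_nbrs_in_V0[OF tight]
    by unfold_locales auto
  have "V - V0 \<noteq> {}"
  proof
    assume "V - V0 = {}"
    then have "weight V f = 0"
      using weight_eq_sum_nonzero by (metis sum.empty)
    then show False
      using tight finite_V \<open>V \<noteq> {}\<close> by simp
  qed
  then show thesis
    using necklace_exists that by blast
qed

theorem theorem8:
  fixes V :: "'a set" and E :: "'a \<Rightarrow> 'a \<Rightarrow> bool"
  assumes "simple_graph V E" and "connected_graph V E" and "claw_free V E"
    and "card V \<ge> 4"
  shows "2 * gamma_cI V E = card V \<longleftrightarrow> in_Omega V E"
proof
  obtain f where f: "cid_function V E f" and weight_f: "weight V f = gamma_cI V E"
    by (rule gamma_cI_attained)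
  assume "2 * gamma_cI V E = card V"
  moreover have "V \<noteq> {}"
    using assms(4) by auto
  ultimately obtain m S where "2 \<le> m" and "graph_iso V E (sun_V m) (necklace_E m S)"
    using tight_cid_necklace[OF assms(1-3) f] weight_f by metis
  then show "in_Omega V E"
    by (intro necklace_in_Omega)
next
  assume "in_Omega V E"
  then obtain m S where "2 \<le> m" and "graph_iso V E (sun_V m) (necklace_E m S)"
    using in_Omega_necklace assms(4) by blast
  then have "2 * gamma_cI V E \<le> card V"
    by (intro necklace_gamma_cI_le)
  moreover obtain f where f: "cid_function V E f" and "weight V f = gamma_cI V E"
    by (rule gamma_cI_attained)
  then have "card V \<le> 2 * gamma_cI V E"
    using claw_free_cid.card_le_2_weight[OF claw_free_cid.intro[OF assms(1,3) f]] by simp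
  ultimately show "2 * gamma_cI V E = card V"
    by simp
qed

end
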